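(* Let $w\in\mathcal{W}$ with $\lambda_{\min}(\Sigma_w)=\Lambda_w>0$, and let $\hat w$ be a function on $\mathcal{X}$ with $\mathbb{E}[(w(\boldsymbol{X})-\hat w(\boldsymbol{X}))^2]=\epsilon^2<\Lambda_w^2/\mathbb{E}[\|\boldsymbol{X}\|_2^4]$. Then $$\|\boldsymbol{\beta}_{\hat w}-\boldsymbol{\beta}_w\|_2\le\frac{\epsilon\|\Sigma_w\|_2\|\boldsymbol{\beta}_w\|_2}{\Lambda_w-\epsilon\sqrt{\mathbb{E}[\|\boldsymbol{X}\|_2^4]}}\left(\frac{\sqrt{\mathbb{E}[\|\boldsymbol{X}\|_2^4]}}{\|\Sigma_w\|_2}+\frac{\sqrt{\mathbb{E}[\|\boldsymbol{X}Y\|_2^2]}}{\|\mathbb{E}[w(\boldsymbol{X})\boldsymbol{X}Y]\|_2}\right).$$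
   Context: $\boldsymbol{X}\in\mathbb{R}^d$ features and $Y\in\mathbb{R}$ outcome with training distribution $P^{\text{tr}}$; $\mathcal{X}$ is the support of $\boldsymbol{X}$, $\mathbb{E}$ expectation under $P^{\text{tr}}$. $\mathcal{W}=\{w:\mathcal{X}\to\mathbb{R}^+\mid\mathbb{E}[w(\boldsymbol{X})]=1\}$. For a function $u$ on $\mathcal{X}$, $\Sigma_u=\mathbb{E}[u(\boldsymbol{X})\boldsymbol{X}\boldsymbol{X}^T]$ and $\boldsymbol{\beta}_u=\Sigma_u^{-1}\mathbb{E}[u(\boldsymbol{X})\boldsymbol{X}Y]$. $\lambda_{\min}$ is the smallest eigenvalue, $\|\cdot\|_2$ the spectral norm on matrices. *)

theory Defs
  imports "HOL-Probability.Probability"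
begin

definition mat_eigenvalues :: "real^'n^'n \<Rightarrow> real set" where
  "mat_eigenvalues A = {l. \<exists>v. v \<noteq> 0 \<and> A *v v = l *\<^sub>R v}"

definition lambda_min :: "real^'n^'n \<Rightarrow> real" where
  "lambda_min A = Inf (mat_eigenvalues A)"

definition spec_norm :: "real^'n^'m \<Rightarrow> real" where
  "spec_norm A = onorm (\<lambda>x. A *v x)"

definition outer :: "real^'n \<Rightarrow> real^'n^'n" where
  "outer x = (\<chi> i j. x $ i * x $ j)"

definition Sigma_u :: "'s measure \<Rightarrow> ('s \<Rightarrow> real^'n) \<Rightarrow> (real^'n \<Rightarrow> real) \<Rightarrow> real^'n^'n" where
  "Sigma_u M X u = (\<integral>\<omega>. u (X \<omega>) *\<^sub>R outer (X \<omega>) \<partial>M)"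

definition cross_u :: "'s measure \<Rightarrow> ('s \<Rightarrow> real^'n) \<Rightarrow> ('s \<Rightarrow> real) \<Rightarrow> (real^'n \<Rightarrow> real) \<Rightarrow> real^'n" where
  "cross_u M X Y u = (\<integral>\<omega>. (u (X \<omega>) * Y \<omega>) *\<^sub>R X \<omega> \<partial>M)"

definition beta_u :: "'s measure \<Rightarrow> ('s \<Rightarrow> real^'n) \<Rightarrow> ('s \<Rightarrow> real) \<Rightarrow> (real^'n \<Rightarrow> real) \<Rightarrow> real^'n" where
  "beta_u M X Y u = matrix_inv (Sigma_u M X u) *v cross_u M X Y u"

end

theory Submission
  imports Defs
begin

text \<open>Write \<open>\<Sigma>\<^sub>w\<^sub>h = \<Sigma>\<^sub>w + \<Delta>\<close> and \<open>E[wh(X) X Y] = E[w(X) X Y] + \<delta>\<close>.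
  Both perturbations are integrals against \<open>wh - w\<close>, so Cauchy-Schwarz gives
  \<open>\<parallel>\<Delta>\<parallel> \<le> \<epsilon> sqrt E\<parallel>X\<parallel>\<^sup>4\<close> and \<open>\<parallel>\<delta>\<parallel> \<le> \<epsilon> sqrt E\<parallel>XY\<parallel>\<^sup>2\<close>.
  As \<open>\<Sigma>\<^sub>w\<close> is symmetric, \<open>\<parallel>\<Sigma>\<^sub>w x\<parallel> \<ge> \<Lambda>\<^sub>w \<parallel>x\<parallel>\<close>, hence \<open>\<Sigma>\<^sub>w\<^sub>h\<close> is bounded below by
  \<open>\<Lambda>\<^sub>w - \<epsilon> sqrt E\<parallel>X\<parallel>\<^sup>4 > 0\<close>, and \<open>\<Sigma>\<^sub>w\<^sub>h (\<beta>\<^sub>w\<^sub>h - \<beta>\<^sub>w) = \<delta> - \<Delta> \<beta>\<^sub>w\<close> yields the absolute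
  bound. It takes the stated relative form through \<open>\<parallel>E[w(X) X Y]\<parallel> = \<parallel>\<Sigma>\<^sub>w \<beta>\<^sub>w\<parallel> \<le> \<parallel>\<Sigma>\<^sub>w\<parallel> \<parallel>\<beta>\<^sub>w\<parallel>\<close>.\<close>

lemma matrix_vector_mult_uminus [simp]:
  fixes A :: "'a::ring_1^'n^'m"
  shows "(- A) *v x = - (A *v x)"
  by (simp add: vec_eq_iff matrix_vector_mult_def sum_negf)

lemma outer_matrix_vector_mult: "outer x *v y = (x \<bullet> y) *\<^sub>R x"
  by (simp add: vec_eq_iff outer_def matrix_vector_mult_def inner_vec_def sum_distrib_left algebra_simps)

lemma norm_outer: "norm (outer x) = norm x ^ 2"
proof -
  have "outer x \<bullet> outer x = (x \<bullet> x)\<^sup>2"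
    by (simp add: outer_def inner_vec_def power2_eq_square sum_product algebra_simps)
  then show ?thesis
    by (simp add: norm_eq_sqrt_inner power2_norm_eq_inner)
qed

lemma transpose_outer [simp]: "transpose (outer x) = outer x"
  by (simp add: transpose_def outer_def vec_eq_iff mult.commute)

lemma borel_measurable_outer [measurable]: "outer \<in> borel_measurable borel"
  by (rule borel_measurable_continuous_onI) (simp add: outer_def continuous_intros)

lemma bounded_linear_transpose: "bounded_linear (transpose :: real^'n^'m \<Rightarrow> real^'m^'n)"
  by (simp add: linear_conv_bounded_linear[symmetric] linear_iff transpose_def vec_eq_iff)

lemma transpose_Sigma_u: "transpose (Sigma_u M X u) = Sigma_u M X u"
  unfolding Sigma_u_def
  by (subst integral_bounded_linear'[OF bounded_linear_transpose bounded_linear_transpose, symmetric])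
    (simp_all add: transpose_scalar)

lemma inner_matrix_vector_mult_commute:
  fixes A :: "real^'n^'n"
  assumes "transpose A = A"
  shows "x \<bullet> (A *v y) = y \<bullet> (A *v x)"
  by (metis assms dot_lmul_matrix inner_commute transpose_matrix_vector)

lemma invertible_if_norm_lower_bound:
  fixes A :: "real^'n^'n"
  assumes "\<And>x. L * norm x \<le> norm (A *v x)" and "L > 0"
  shows "invertible A"
proof -
  have "x = 0" if "A *v x = 0" for x
    using assms(1)[of x] that \<open>L > 0\<close> by (simp add: mult_le_0_iff)
  then show ?thesis
    by (simp add: invertible_left_inverse matrix_left_invertible_ker)
qed

lemma invertible_matrix_inv_right:
  fixes A :: "real^'n^'n"
  assumes "invertible A"
  shows "A *v (matrix_inv A *v y) = y"
proof -
  have "A ** matrix_inv A = mat 1 \<and> matrix_inv A ** A = mat 1"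
    using assms unfolding invertible_def matrix_inv_def by (rule someI_ex)
  then show ?thesis
    by (metis matrix_vector_mul_assoc matrix_vector_mul_lid)
qed

lemma psd_quadratic_form_eq_0_imp_kernel:
  fixes B :: "real^'n^'n"
  assumes sym: "transpose B = B" and psd: "\<And>y. 0 \<le> y \<bullet> (B *v y)"
    and x: "x \<bullet> (B *v x) = 0"
  shows "B *v x = 0"
proof (rule ccontr)
  define z where "z = B *v x"
  define a where "a = z \<bullet> z"
  define b where "b = z \<bullet> (B *v z)"
  assume "B *v x \<noteq> 0"
  then have "a > 0" by (simp add: a_def z_def)
  have "b \<ge> 0" using psd by (simp add: b_def)
  define t where "t = a / (b + 1)"
  have "t > 0" using \<open>a > 0\<close> \<open>b \<ge> 0\<close> by (simp add: t_def)
  have "0 \<le> (x - t *\<^sub>R z) \<bullet> (B *v (x - t *\<^sub>R z))" by (rule psd)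
  also have "\<dots> = x \<bullet> (B *v x) - 2 * t * a + t\<^sup>2 * b"
    using inner_matrix_vector_mult_commute[OF sym, of x z]
    by (simp add: matrix_vector_mult_diff_distrib inner_diff_left inner_diff_right
        matrix_vector_mult_scaleR a_def b_def z_def power2_eq_square algebra_simps)
  finally have "2 * t * a \<le> t\<^sup>2 * b" using x by simp
  then have "2 * a \<le> t * b" using \<open>t > 0\<close> by (simp add: power2_eq_square)
  moreover have "t * b < a" using \<open>a > 0\<close> \<open>b \<ge> 0\<close> by (simp add: t_def field_simps)
  ultimately show False using \<open>a > 0\<close> by simp
qed

text \<open>The minimum of the quadratic form on the unit sphere is an eigenvalue: subtracting it
  leaves a positive semidefinite form vanishing at the minimiser.\<close>
lemma symmetric_matrix_eigenvalue_le_quadratic_form: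
  fixes A :: "real^'n^'n"
  assumes sym: "transpose A = A"
  obtains m where "m \<in> mat_eigenvalues A" and "\<And>x. m * (x \<bullet> x) \<le> x \<bullet> (A *v x)"
proof -
  let ?q = "\<lambda>x. x \<bullet> (A *v x)"
  have "sphere (0::real^'n) 1 \<noteq> {}"
    using vector_choose_size[of 1] by auto
  moreover have "continuous_on (sphere 0 1) ?q"
    by (intro continuous_intros linear_continuous_on matrix_vector_mul_bounded_linear)
  ultimately obtain x0 where x0: "x0 \<in> sphere 0 1" and min: "\<And>y. y \<in> sphere 0 1 \<Longrightarrow> ?q x0 \<le> ?q y"
    using continuous_attains_inf[OF compact_sphere] by blast
  define m where "m = ?q x0"
  have le: "m * (y \<bullet> y) \<le> ?q y" for y
  proof (cases "y = 0")
    case False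
    then have "inverse (norm y) *\<^sub>R y \<in> sphere 0 1" by simp
    from min[OF this] have "m \<le> inverse (norm y) ^ 2 * ?q y"
      by (simp add: m_def matrix_vector_mult_scaleR power2_eq_square)
    with False show ?thesis
      by (simp add: field_simps power2_norm_eq_inner)
  qed simp
  define B where "B = A - m *\<^sub>R mat 1"
  have B: "B *v y = A *v y - m *\<^sub>R y" for y
    by (simp add: B_def matrix_vector_mult_diff_rdistrib scaleR_matrix_vector_assoc[symmetric])
  have "B *v x0 = 0"
  proof (rule psd_quadratic_form_eq_0_imp_kernel)
    show "transpose B = B"
      using sym by (simp add: B_def transpose_def mat_def vec_eq_iff)
    show "0 \<le> y \<bullet> (B *v y)" for y
      using le[of y] by (simp add: B inner_diff_right algebra_simps)
    show "x0 \<bullet> (B *v x0) = 0"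
      using x0 by (simp add: B inner_diff_right m_def power2_norm_eq_inner[symmetric])
  qed
  then have "A *v x0 = m *\<^sub>R x0" by (simp add: B)
  moreover have "x0 \<noteq> 0" using x0 by auto
  ultimately have "m \<in> mat_eigenvalues A" unfolding mat_eigenvalues_def by blast
  with le show thesis using that by blast
qed

lemma lambda_min_quadratic_form_le:
  fixes A :: "real^'n^'n"
  assumes "transpose A = A"
  shows "lambda_min A * (x \<bullet> x) \<le> x \<bullet> (A *v x)"
proof -
  obtain m where m: "m \<in> mat_eigenvalues A" and le: "\<And>x. m * (x \<bullet> x) \<le> x \<bullet> (A *v x)"
    using symmetric_matrix_eigenvalue_le_quadratic_form[OF assms] by blast
  have "m \<le> l" if l: "l \<in> mat_eigenvalues A" for l
  proof -
    obtain v where "v \<noteq> 0" "A *v v = l *\<^sub>R v"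
      using l unfolding mat_eigenvalues_def by blast
    then have "m * (v \<bullet> v) \<le> l * (v \<bullet> v)" using le[of v] by simp
    moreover have "v \<bullet> v > 0" using \<open>v \<noteq> 0\<close> by simp
    ultimately show ?thesis by simp
  qed
  then have "lambda_min A \<le> m"
    unfolding lambda_min_def by (meson bdd_belowI cInf_lower m)
  then have "lambda_min A * (x \<bullet> x) \<le> m * (x \<bullet> x)"
    by (simp add: mult_right_mono)
  also have "\<dots> \<le> x \<bullet> (A *v x)" by (rule le)
  finally show ?thesis .
qed

lemma lambda_min_norm_le:
  fixes A :: "real^'n^'n"
  assumes "transpose A = A" and "lambda_min A \<ge> 0"
  shows "lambda_min A * norm x \<le> norm (A *v x)"
proof (cases "x = 0")
  case False
  have "lambda_min A * norm x * norm x \<le> norm x * norm (A *v x)"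
    using lambda_min_quadratic_form_le[OF assms(1), of x] norm_cauchy_schwarz[of x "A *v x"]
    by (simp add: power2_norm_eq_inner[symmetric] power2_eq_square mult.assoc)
  with False show ?thesis by (simp add: mult.commute)
qed simp

lemma Cauchy_Schwarz_integral:
  fixes f g :: "'a \<Rightarrow> real"
  assumes [measurable]: "f \<in> borel_measurable M" "g \<in> borel_measurable M"
    and f2: "integrable M (\<lambda>x. f x ^ 2)" and g2: "integrable M (\<lambda>x. g x ^ 2)"
  shows "integrable M (\<lambda>x. \<bar>f x\<bar> * \<bar>g x\<bar>)"
    and "(\<integral>x. \<bar>f x\<bar> * \<bar>g x\<bar> \<partial>M) \<le> sqrt (\<integral>x. f x ^ 2 \<partial>M) * sqrt (\<integral>x. g x ^ 2 \<partial>M)"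
proof -
  have "\<bar>f x\<bar> * \<bar>g x\<bar> \<le> f x ^ 2 + g x ^ 2" for x
  proof -
    have "\<bar>f x\<bar> * \<bar>g x\<bar> \<le> 2 * \<bar>f x\<bar> * \<bar>g x\<bar>" by simp
    also have "\<dots> \<le> f x ^ 2 + g x ^ 2"
      using sum_squares_bound[of "\<bar>f x\<bar>" "\<bar>g x\<bar>"] by (simp add: power2_abs)
    finally show ?thesis .
  qed
  then show fg: "integrable M (\<lambda>x. \<bar>f x\<bar> * \<bar>g x\<bar>)"
    by (intro Bochner_Integration.integrable_bound[OF Bochner_Integration.integrable_add[OF f2 g2]])
      auto
  have nn: "(\<integral>\<^sup>+x. ennreal (h x) \<partial>M) = ennreal (\<integral>x. h x \<partial>M)"
    if "integrable M h" "\<And>x. 0 \<le> h x" for h :: "'a \<Rightarrow> real"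
    using that by (intro nn_integral_eq_integral) auto
  have "(\<integral>\<^sup>+x. ennreal \<bar>f x\<bar> * ennreal \<bar>g x\<bar> \<partial>M)\<^sup>2
      \<le> (\<integral>\<^sup>+x. ennreal \<bar>f x\<bar> ^ 2 \<partial>M) * (\<integral>\<^sup>+x. ennreal \<bar>g x\<bar> ^ 2 \<partial>M)"
    by (rule Cauchy_Schwarz_nn_integral) auto
  then have "ennreal ((\<integral>x. \<bar>f x\<bar> * \<bar>g x\<bar> \<partial>M)\<^sup>2)
      \<le> ennreal ((\<integral>x. f x ^ 2 \<partial>M) * (\<integral>x. g x ^ 2 \<partial>M))"
    using nn[OF fg] nn[OF f2] nn[OF g2]
    by (simp add: ennreal_mult[symmetric] ennreal_power power2_abs)
  then have "(\<integral>x. \<bar>f x\<bar> * \<bar>g x\<bar> \<partial>M)\<^sup>2 \<le> (\<integral>x. f x ^ 2 \<partial>M) * (\<integral>x. g x ^ 2 \<partial>M)"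
    by simp
  then show "(\<integral>x. \<bar>f x\<bar> * \<bar>g x\<bar> \<partial>M) \<le> sqrt (\<integral>x. f x ^ 2 \<partial>M) * sqrt (\<integral>x. g x ^ 2 \<partial>M)"
    by (simp add: real_le_rsqrt real_sqrt_mult[symmetric])
qed

lemma
  fixes a :: "'a \<Rightarrow> real" and X :: "'a \<Rightarrow> real^'n"
  assumes [measurable]: "a \<in> borel_measurable M" "X \<in> borel_measurable M"
    and int: "integrable M (\<lambda>\<omega>. \<bar>a \<omega>\<bar> * norm (X \<omega>) ^ 2)"
  shows integrable_scaleR_outer: "integrable M (\<lambda>\<omega>. a \<omega> *\<^sub>R outer (X \<omega>))"
    and norm_integral_scaleR_outer_mult_le:
      "norm ((\<integral>\<omega>. a \<omega> *\<^sub>R outer (X \<omega>) \<partial>M) *v x) \<le> (\<integral>\<omega>. \<bar>a \<omega>\<bar> * norm (X \<omega>) ^ 2 \<partial>M) * norm x"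
proof -
  show int_outer: "integrable M (\<lambda>\<omega>. a \<omega> *\<^sub>R outer (X \<omega>))"
    by (rule Bochner_Integration.integrable_bound[OF int]) (auto simp: norm_outer)
  have "bounded_linear (\<lambda>A::real^'n^'n. A *v x)"
    by (simp add: linear_conv_bounded_linear[symmetric] linear_iff
        matrix_vector_mult_add_rdistrib scaleR_matrix_vector_assoc)
  then have "(\<integral>\<omega>. a \<omega> *\<^sub>R outer (X \<omega>) \<partial>M) *v x = (\<integral>\<omega>. (a \<omega> *\<^sub>R outer (X \<omega>)) *v x \<partial>M)"
    by (rule integral_bounded_linear[OF _ int_outer, symmetric])
  also have "norm \<dots> \<le> (\<integral>\<omega>. norm ((a \<omega> *\<^sub>R outer (X \<omega>)) *v x) \<partial>M)"
    by (rule integral_norm_bound)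
  also have "\<dots> \<le> (\<integral>\<omega>. norm x * (\<bar>a \<omega>\<bar> * norm (X \<omega>) ^ 2) \<partial>M)"
  proof (rule integral_mono')
    show "integrable M (\<lambda>\<omega>. norm x * (\<bar>a \<omega>\<bar> * norm (X \<omega>) ^ 2))"
      using int by simp
    fix \<omega>
    have "norm ((a \<omega> *\<^sub>R outer (X \<omega>)) *v x) = \<bar>a \<omega>\<bar> * (\<bar>X \<omega> \<bullet> x\<bar> * norm (X \<omega>))"
      by (simp add: scaleR_matrix_vector_assoc[symmetric] outer_matrix_vector_mult abs_mult)
    also have "\<dots> \<le> \<bar>a \<omega>\<bar> * ((norm (X \<omega>) * norm x) * norm (X \<omega>))"
      by (intro mult_left_mono mult_right_mono Cauchy_Schwarz_ineq2) auto
    finally show "norm ((a \<omega> *\<^sub>R outer (X \<omega>)) *v x) \<le> norm x * (\<bar>a \<omega>\<bar> * norm (X \<omega>) ^ 2)"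
      by (simp add: power2_eq_square algebra_simps)
  qed simp
  also have "\<dots> = (\<integral>\<omega>. \<bar>a \<omega>\<bar> * norm (X \<omega>) ^ 2 \<partial>M) * norm x"
    by (simp add: mult.commute)
  finally show "norm ((\<integral>\<omega>. a \<omega> *\<^sub>R outer (X \<omega>) \<partial>M) *v x) \<le> (\<integral>\<omega>. \<bar>a \<omega>\<bar> * norm (X \<omega>) ^ 2 \<partial>M) * norm x" .
qed

lemma norm_Sigma_u_diff_le:
  fixes X :: "'s \<Rightarrow> real^'d" and u v :: "real^'d \<Rightarrow> real"
  assumes [measurable]: "X \<in> borel_measurable M" "u \<in> borel_measurable borel" "v \<in> borel_measurable borel"
    and int_u: "integrable M (\<lambda>\<omega>. u (X \<omega>) *\<^sub>R outer (X \<omega>))"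
    and int_X4: "integrable M (\<lambda>\<omega>. norm (X \<omega>) ^ 4)"
    and int_diff: "integrable M (\<lambda>\<omega>. (u (X \<omega>) - v (X \<omega>)) ^ 2)"
  shows "norm ((Sigma_u M X v - Sigma_u M X u) *v x)
    \<le> sqrt (\<integral>\<omega>. (u (X \<omega>) - v (X \<omega>)) ^ 2 \<partial>M) * sqrt (\<integral>\<omega>. norm (X \<omega>) ^ 4 \<partial>M) * norm x"
proof -
  define a where "a \<omega> = u (X \<omega>) - v (X \<omega>)" for \<omega>
  have [measurable]: "a \<in> borel_measurable M"
    unfolding a_def by measurable
  have int_X22: "integrable M (\<lambda>\<omega>. (norm (X \<omega>) ^ 2) ^ 2)"
    using int_X4 by (simp flip: power_mult)
  note CS = Cauchy_Schwarz_integral[of a M "\<lambda>\<omega>. norm (X \<omega>) ^ 2", OF _ _ _ int_X22]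
  have int_aX: "integrable M (\<lambda>\<omega>. \<bar>a \<omega>\<bar> * norm (X \<omega>) ^ 2)"
    using CS(1) int_diff by (simp add: a_def)
  have "Sigma_u M X v = (\<integral>\<omega>. u (X \<omega>) *\<^sub>R outer (X \<omega>) - a \<omega> *\<^sub>R outer (X \<omega>) \<partial>M)"
    unfolding Sigma_u_def by (rule Bochner_Integration.integral_cong) (simp_all add: a_def algebra_simps)
  also have "\<dots> = Sigma_u M X u - (\<integral>\<omega>. a \<omega> *\<^sub>R outer (X \<omega>) \<partial>M)"
    unfolding Sigma_u_def
    by (rule Bochner_Integration.integral_diff[OF int_u integrable_scaleR_outer[OF _ _ int_aX]]) measurable
  finally have "norm ((Sigma_u M X v - Sigma_u M X u) *v x) = norm ((\<integral>\<omega>. a \<omega> *\<^sub>R outer (X \<omega>) \<partial>M) *v x)"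
    by (simp add: matrix_vector_mult_diff_rdistrib norm_minus_commute)
  also have "\<dots> \<le> (\<integral>\<omega>. \<bar>a \<omega>\<bar> * norm (X \<omega>) ^ 2 \<partial>M) * norm x"
    by (rule norm_integral_scaleR_outer_mult_le[OF _ _ int_aX]) measurable
  also have "\<dots> \<le> sqrt (\<integral>\<omega>. (u (X \<omega>) - v (X \<omega>)) ^ 2 \<partial>M) * sqrt (\<integral>\<omega>. norm (X \<omega>) ^ 4 \<partial>M) * norm x"
    using CS(2) int_diff by (intro mult_right_mono) (simp_all add: a_def flip: power_mult)
  finally show ?thesis .
qed

lemma norm_cross_u_diff_le:
  fixes X :: "'s \<Rightarrow> real^'d" and Y :: "'s \<Rightarrow> real" and u v :: "real^'d \<Rightarrow> real"
  assumes [measurable]: "X \<in> borel_measurable M" "Y \<in> borel_measurable M"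
    "u \<in> borel_measurable borel" "v \<in> borel_measurable borel"
    and int_u: "integrable M (\<lambda>\<omega>. (u (X \<omega>) * Y \<omega>) *\<^sub>R X \<omega>)"
    and int_YX: "integrable M (\<lambda>\<omega>. norm (Y \<omega> *\<^sub>R X \<omega>) ^ 2)"
    and int_diff: "integrable M (\<lambda>\<omega>. (u (X \<omega>) - v (X \<omega>)) ^ 2)"
  shows "norm (cross_u M X Y v - cross_u M X Y u)
    \<le> sqrt (\<integral>\<omega>. (u (X \<omega>) - v (X \<omega>)) ^ 2 \<partial>M) * sqrt (\<integral>\<omega>. norm (Y \<omega> *\<^sub>R X \<omega>) ^ 2 \<partial>M)"
proof -
  define a where "a \<omega> = u (X \<omega>) - v (X \<omega>)" for \<omega>
  have [measurable]: "a \<in> borel_measurable M"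
    unfolding a_def by measurable
  note CS = Cauchy_Schwarz_integral[of a M "\<lambda>\<omega>. norm (Y \<omega> *\<^sub>R X \<omega>)", OF _ _ _ int_YX]
  have int_aYX: "integrable M (\<lambda>\<omega>. \<bar>a \<omega>\<bar> * norm (Y \<omega> *\<^sub>R X \<omega>))"
    using CS(1) int_diff by (simp add: a_def)
  have int_a: "integrable M (\<lambda>\<omega>. (a \<omega> * Y \<omega>) *\<^sub>R X \<omega>)"
    by (rule Bochner_Integration.integrable_bound[OF int_aYX]) (auto simp: abs_mult)
  have "cross_u M X Y v = (\<integral>\<omega>. (u (X \<omega>) * Y \<omega>) *\<^sub>R X \<omega> - (a \<omega> * Y \<omega>) *\<^sub>R X \<omega> \<partial>M)"
    unfolding cross_u_def by (rule Bochner_Integration.integral_cong) (simp_all add: a_def algebra_simps)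
  also have "\<dots> = cross_u M X Y u - (\<integral>\<omega>. (a \<omega> * Y \<omega>) *\<^sub>R X \<omega> \<partial>M)"
    unfolding cross_u_def by (rule Bochner_Integration.integral_diff[OF int_u int_a])
  finally have "norm (cross_u M X Y v - cross_u M X Y u) = norm (\<integral>\<omega>. (a \<omega> * Y \<omega>) *\<^sub>R X \<omega> \<partial>M)"
    by simp
  also have "\<dots> \<le> (\<integral>\<omega>. \<bar>a \<omega>\<bar> * norm (Y \<omega> *\<^sub>R X \<omega>) \<partial>M)"
    using integral_norm_bound[of M "\<lambda>\<omega>. (a \<omega> * Y \<omega>) *\<^sub>R X \<omega>"] by (simp add: abs_mult mult.assoc)
  also have "\<dots> \<le> sqrt (\<integral>\<omega>. (u (X \<omega>) - v (X \<omega>)) ^ 2 \<partial>M) * sqrt (\<integral>\<omega>. norm (Y \<omega> *\<^sub>R X \<omega>) ^ 2 \<partial>M)"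
    using CS(2) int_diff by (simp add: a_def)
  finally show ?thesis .
qed

lemma norm_matrix_vector_mult_le_spec_norm: "norm (A *v x) \<le> spec_norm A * norm x"
  unfolding spec_norm_def by (rule onorm) (rule matrix_vector_mul_bounded_linear)

lemma norm_matrix_inv_perturbation_le:
  fixes S S' :: "real^'n^'n"
  assumes S: "\<And>x. L * norm x \<le> norm (S *v x)"
    and D: "\<And>x. norm ((S' - S) *v x) \<le> \<delta> * norm x"
    and "0 \<le> \<delta>" and "\<delta> < L"
  shows "norm (matrix_inv S' *v c' - matrix_inv S *v c)
    \<le> (norm (c' - c) + \<delta> * norm (matrix_inv S *v c)) / (L - \<delta>)"
proof -
  define b where "b = matrix_inv S *v c"
  define b' where "b' = matrix_inv S' *v c'"
  have S': "(L - \<delta>) * norm x \<le> norm (S' *v x)" for x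
  proof -
    have "norm (S *v x) \<le> norm (S' *v x) + norm ((S' - S) *v x)"
      using norm_triangle_ineq4[of "S' *v x" "(S' - S) *v x"]
      by (simp add: matrix_vector_mult_diff_rdistrib)
    with S[of x] D[of x] show ?thesis by (simp add: algebra_simps)
  qed
  have "S *v b = c"
    unfolding b_def using assms(3,4)
    by (intro invertible_matrix_inv_right invertible_if_norm_lower_bound[OF S]) simp
  moreover have "S' *v b' = c'"
    unfolding b'_def using assms(4)
    by (intro invertible_matrix_inv_right invertible_if_norm_lower_bound[OF S']) simp
  ultimately have "S' *v (b' - b) = (c' - c) - (S' - S) *v b"
    by (simp add: matrix_vector_mult_diff_distrib matrix_vector_mult_diff_rdistrib)
  then have "(L - \<delta>) * norm (b' - b) \<le> norm (c' - c) + \<delta> * norm b"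
    using S'[of "b' - b"] D[of b] norm_triangle_ineq4[of "c' - c" "(S' - S) *v b"] by simp
  with assms(4) show ?thesis
    unfolding b_def[symmetric] b'_def[symmetric] by (simp add: field_simps)
qed

lemma add_le_relative_form:
  fixes t s N nb nc :: real
  assumes "0 < nc" and "nc \<le> N * nb" and "0 \<le> nb" and "0 \<le> t"
  shows "t + s * nb \<le> N * nb * (s / N + t / nc)"
proof -
  have "N > 0"
    using assms by (smt (verit) mult_nonpos_nonneg)
  have "nc * t \<le> N * nb * t"
    using assms(2,4) by (rule mult_right_mono)
  then have "t \<le> N * nb * t / nc"
    using assms(1) by (simp add: le_divide_eq mult.commute)
  moreover have "N * nb * (s / N + t / nc) = s * nb + N * nb * t / nc"
    using \<open>N > 0\<close> by (simp add: field_simps)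
  ultimately show ?thesis by simp
qed

lemma mult_sqrt_less_if_power2_less_divide:
  fixes e L E :: real
  assumes "0 \<le> e" and "0 < L" and "e\<^sup>2 < L\<^sup>2 / E"
  shows "e * sqrt E < L"
proof -
  have "E > 0"
  proof (rule ccontr)
    assume "\<not> E > 0"
    then have "L\<^sup>2 / E \<le> 0" by (simp add: divide_nonneg_nonpos)
    with assms(3) show False by (smt (verit) zero_le_power2)
  qed
  with assms(3) have "(e * sqrt E)\<^sup>2 < L\<^sup>2"
    by (simp add: power_mult_distrib pos_less_divide_eq)
  with assms(2) show ?thesis by (simp add: power_less_imp_less_base)
qed

theorem proposition4:
  fixes M :: "'s measure" and X :: "'s \<Rightarrow> real^'d" and Y :: "'s \<Rightarrow> real"
    and w wh :: "real^'d \<Rightarrow> real" and eps Lam :: real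
  assumes "prob_space M"
    and "X \<in> borel_measurable M" and "Y \<in> borel_measurable M"
    and "w \<in> borel_measurable borel" and "wh \<in> borel_measurable borel"
    and "\<forall>\<omega>\<in>space M. w (X \<omega>) > 0"
    and "(\<integral>\<omega>. w (X \<omega>) \<partial>M) = 1"
    and "integrable M (\<lambda>\<omega>. w (X \<omega>) *\<^sub>R outer (X \<omega>))"
    and "integrable M (\<lambda>\<omega>. (w (X \<omega>) * Y \<omega>) *\<^sub>R X \<omega>)"
    and "integrable M (\<lambda>\<omega>. norm (X \<omega>) ^ 4)"
    and "integrable M (\<lambda>\<omega>. norm (Y \<omega> *\<^sub>R X \<omega>) ^ 2)"
    and "integrable M (\<lambda>\<omega>. (w (X \<omega>) - wh (X \<omega>)) ^ 2)"
    and "lambda_min (Sigma_u M X w) = Lam" and "Lam > 0"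
    and "eps \<ge> 0"
    and "(\<integral>\<omega>. (w (X \<omega>) - wh (X \<omega>)) ^ 2 \<partial>M) = eps ^ 2"
    and "eps ^ 2 < Lam ^ 2 / (\<integral>\<omega>. norm (X \<omega>) ^ 4 \<partial>M)"
    and "cross_u M X Y w \<noteq> 0"
  shows "norm (beta_u M X Y wh - beta_u M X Y w)
    \<le> eps * spec_norm (Sigma_u M X w) * norm (beta_u M X Y w)
        / (Lam - eps * sqrt (\<integral>\<omega>. norm (X \<omega>) ^ 4 \<partial>M))
      * (sqrt (\<integral>\<omega>. norm (X \<omega>) ^ 4 \<partial>M) / spec_norm (Sigma_u M X w)
         + sqrt (\<integral>\<omega>. norm (Y \<omega> *\<^sub>R X \<omega>) ^ 2 \<partial>M) / norm (cross_u M X Y w))"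
proof -
  define S c b where "S = Sigma_u M X w" and "c = cross_u M X Y w" and "b = beta_u M X Y w"
  define s t where "s = sqrt (\<integral>\<omega>. norm (X \<omega>) ^ 4 \<partial>M)"
    and "t = sqrt (\<integral>\<omega>. norm (Y \<omega> *\<^sub>R X \<omega>) ^ 2 \<partial>M)"
  have eps: "sqrt (\<integral>\<omega>. (w (X \<omega>) - wh (X \<omega>)) ^ 2 \<partial>M) = eps"
    using assms(15,16) by simp
  have S_lower: "Lam * norm x \<le> norm (S *v x)" for x
    using lambda_min_norm_le[OF transpose_Sigma_u, of M X w x] assms(13,14) by (simp add: S_def)
  have "eps * s < Lam"
    unfolding s_def using assms(15,14,17) by (rule mult_sqrt_less_if_power2_less_divide)
  have "norm (beta_u M X Y wh - b) \<le> (norm (cross_u M X Y wh - c) + eps * s * norm b) / (Lam - eps * s)"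
    unfolding b_def beta_u_def S_def[symmetric] c_def[symmetric]
    using S_lower norm_Sigma_u_diff_le[OF assms(2,4,5,8,10,12)] eps \<open>eps * s < Lam\<close> assms(15)
    by (intro norm_matrix_inv_perturbation_le) (simp_all add: S_def s_def)
  also have "\<dots> \<le> eps * (t + s * norm b) / (Lam - eps * s)"
    using norm_cross_u_diff_le[OF assms(2-5,9,11,12)] eps \<open>eps * s < Lam\<close>
    by (intro divide_right_mono) (simp_all add: c_def t_def algebra_simps)
  also have "\<dots> \<le> eps * (spec_norm S * norm b * (s / spec_norm S + t / norm c)) / (Lam - eps * s)"
  proof -
    have "S *v b = c"
      unfolding b_def beta_u_def S_def[symmetric] c_def[symmetric] using assms(14)
      by (intro invertible_matrix_inv_right invertible_if_norm_lower_bound[OF S_lower])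
    then have "norm c \<le> spec_norm S * norm b"
      using norm_matrix_vector_mult_le_spec_norm by metis
    then show ?thesis
      using add_le_relative_form[of "norm c" "spec_norm S" "norm b" t s] assms(15,18) \<open>eps * s < Lam\<close>
      by (intro divide_right_mono mult_left_mono) (simp_all add: c_def t_def)
  qed
  finally show ?thesis
    by (simp add: S_def b_def c_def s_def t_def)
qed

end
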